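(* There exists a finite relational structure $\mathcal{A}$ with exactly $3$ elements having a Q-core that is not an induced substructure of $\mathcal{A}$.
   Context: Here positive Horn (pH) sentences are first-order sentences built from relational atoms without equality using only $\exists$, $\forall$, $\wedge$. A substructure of $\mathcal{A}$ is a structure $\mathcal{B}$ whose domain is a subset of $A$ and each of whose relations is a subset of the corresponding relation of $\mathcal{A}$ (not necessarily induced). A Q-core of $\mathcal{A}$ is a substructure $\mathcal{B}$ of $\mathcal{A}$ such that $\mathcal{A}$ and $\mathcal{B}$ satisfy exactly the same pH sentences, and which is minimal under inclusion among substructures of $\mathcal{A}$ with this property. *)

theory Defs
  imports Main
begin

text \<open>Relational signatures: relation symbols are natural numbers; a signature is
a finite set Sig of symbols together with an arity function ar.\<close>

record 'a struc =
  dom :: "'a set"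
  rel :: "nat \<Rightarrow> 'a list set"

definition is_struc :: "nat set \<Rightarrow> (nat \<Rightarrow> nat) \<Rightarrow> 'a struc \<Rightarrow> bool" where
  "is_struc Sig ar A \<longleftrightarrow> dom A \<noteq> {} \<and>
     (\<forall>R\<in>Sig. \<forall>t\<in>rel A R. length t = ar R \<and> set t \<subseteq> dom A) \<and>
     (\<forall>R. R \<notin> Sig \<longrightarrow> rel A R = {})"

definition substruc :: "nat set \<Rightarrow> (nat \<Rightarrow> nat) \<Rightarrow> 'a struc \<Rightarrow> 'a struc \<Rightarrow> bool" where
  "substruc Sig ar B A \<longleftrightarrow> is_struc Sig ar B \<and> is_struc Sig ar A \<and>
     dom B \<subseteq> dom A \<and> (\<forall>R\<in>Sig. rel B R \<subseteq> rel A R)"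

definition induced_substruc :: "nat set \<Rightarrow> (nat \<Rightarrow> nat) \<Rightarrow> 'a struc \<Rightarrow> 'a struc \<Rightarrow> bool" where
  "induced_substruc Sig ar B A \<longleftrightarrow> substruc Sig ar B A \<and>
     (\<forall>R\<in>Sig. rel B R = {t \<in> rel A R. set t \<subseteq> dom B})"

text \<open>Positive Horn formulas: atoms (no equality), conjunction, \<exists>, \<forall>.
Variables are natural numbers.\<close>
datatype pH = Atom nat "nat list" | Conj pH pH | Ex nat pH | All nat pH

fun fv :: "pH \<Rightarrow> nat set" where
  "fv (Atom R xs) = set xs"
| "fv (Conj p q) = fv p \<union> fv q"
| "fv (Ex x p) = fv p - {x}"
| "fv (All x p) = fv p - {x}"

fun wf_pH :: "nat set \<Rightarrow> (nat \<Rightarrow> nat) \<Rightarrow> pH \<Rightarrow> bool" where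
  "wf_pH Sig ar (Atom R xs) \<longleftrightarrow> R \<in> Sig \<and> length xs = ar R"
| "wf_pH Sig ar (Conj p q) \<longleftrightarrow> wf_pH Sig ar p \<and> wf_pH Sig ar q"
| "wf_pH Sig ar (Ex x p) \<longleftrightarrow> wf_pH Sig ar p"
| "wf_pH Sig ar (All x p) \<longleftrightarrow> wf_pH Sig ar p"

definition pH_sentence :: "nat set \<Rightarrow> (nat \<Rightarrow> nat) \<Rightarrow> pH \<Rightarrow> bool" where
  "pH_sentence Sig ar p \<longleftrightarrow> wf_pH Sig ar p \<and> fv p = {}"

fun sat :: "'a struc \<Rightarrow> (nat \<Rightarrow> 'a) \<Rightarrow> pH \<Rightarrow> bool" where
  "sat A e (Atom R xs) \<longleftrightarrow> map e xs \<in> rel A R"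
| "sat A e (Conj p q) \<longleftrightarrow> sat A e p \<and> sat A e q"
| "sat A e (Ex x p) \<longleftrightarrow> (\<exists>a\<in>dom A. sat A (e(x := a)) p)"
| "sat A e (All x p) \<longleftrightarrow> (\<forall>a\<in>dom A. sat A (e(x := a)) p)"

text \<open>Truth of a sentence (independent of the assignment for sentences).\<close>
definition models :: "'a struc \<Rightarrow> pH \<Rightarrow> bool" where
  "models A p \<longleftrightarrow> (\<forall>e. (\<forall>v. e v \<in> dom A) \<longrightarrow> sat A e p)"

definition pH_equiv :: "nat set \<Rightarrow> (nat \<Rightarrow> nat) \<Rightarrow> 'a struc \<Rightarrow> 'a struc \<Rightarrow> bool" where
  "pH_equiv Sig ar A B \<longleftrightarrow> (\<forall>p. pH_sentence Sig ar p \<longrightarrow> (models A p \<longleftrightarrow> models B p))"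

definition Q_core :: "nat set \<Rightarrow> (nat \<Rightarrow> nat) \<Rightarrow> 'a struc \<Rightarrow> 'a struc \<Rightarrow> bool" where
  "Q_core Sig ar B A \<longleftrightarrow> substruc Sig ar B A \<and> pH_equiv Sig ar A B \<and>
     (\<forall>C. substruc Sig ar C A \<and> pH_equiv Sig ar A C \<and> substruc Sig ar C B \<longrightarrow> C = B)"

end

theory Submission
  imports Defs
begin

text \<open>Let \<open>A\<close> have domain \<open>{0,1,2}\<close> and the binary relation \<open>{(0,0),(0,1)}\<close>, and let
\<open>B\<close> be the substructure on \<open>{0,1}\<close> keeping only the loop \<open>(0,0)\<close>; it is not induced since
it drops \<open>(0,1)\<close>. Positive Horn sentences are preserved by surjective hypermorphisms
(multi-valued maps sending tuples of the relations to tuples of the relations), and such maps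
exist in both directions between \<open>A\<close> and \<open>B\<close>, so they are pH-equivalent. A smaller
substructure \<open>C\<close> of \<open>B\<close> with the same theory must satisfy \<open>\<exists>x. R x x\<close>, so it keeps the loop
at \<open>0\<close>, and must falsify \<open>\<forall>x. R x x\<close>, so it keeps the loopless element \<open>1\<close>; hence \<open>C = B\<close>.\<close>

definition surj_hypermorphism :: "('a \<Rightarrow> 'b set) \<Rightarrow> 'a struc \<Rightarrow> 'b struc \<Rightarrow> bool" where
  "surj_hypermorphism g A B \<longleftrightarrow>
     (\<forall>a\<in>dom A. g a \<noteq> {} \<and> g a \<subseteq> dom B) \<and>
     (\<forall>b\<in>dom B. \<exists>a\<in>dom A. b \<in> g a) \<and>
     (\<forall>R t t'. t \<in> rel A R \<longrightarrow> list_all2 (\<lambda>x y. y \<in> g x) t t' \<longrightarrow> t' \<in> rel B R)"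

lemma sat_surj_hypermorphism:
  assumes g: "surj_hypermorphism g A B"
    and "sat A e \<phi>" and "\<forall>v. e v \<in> dom A" and "\<forall>v. e' v \<in> g (e v)"
  shows "sat B e' \<phi>"
  using assms(2-)
proof (induction \<phi> arbitrary: e e')
  case (Atom R xs)
  have "list_all2 (\<lambda>x y. y \<in> g x) (map e xs) (map e' xs)"
    using Atom.prems(3) by (induction xs) auto
  then show ?case
    using Atom.prems(1) g unfolding surj_hypermorphism_def by auto
next
  case (Conj p q)
  then show ?case by auto
next
  case (Ex x p)
  then obtain a where a: "a \<in> dom A" "sat A (e(x := a)) p" by auto
  then obtain b where b: "b \<in> g a" "b \<in> dom B"
    using g unfolding surj_hypermorphism_def by blast
  have "sat B (e'(x := b)) p"
    using Ex.IH[OF a(2)] Ex.prems a b by auto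
  with b show ?case by auto
next
  case (All x p)
  show ?case
  proof (simp, intro ballI)
    fix b assume "b \<in> dom B"
    then obtain a where a: "a \<in> dom A" "b \<in> g a"
      using g unfolding surj_hypermorphism_def by blast
    have "sat A (e(x := a)) p" using All.prems(1) a by auto
    then show "sat B (e'(x := b)) p" using All.IH All.prems a by auto
  qed
qed

lemma models_surj_hypermorphism:
  assumes g: "surj_hypermorphism g A B" and "models A \<phi>"
  shows "models B \<phi>"
  unfolding models_def
proof (intro allI impI)
  fix e' :: "nat \<Rightarrow> 'b" assume e': "\<forall>v. e' v \<in> dom B"
  define e where "e v = (SOME a. a \<in> dom A \<and> e' v \<in> g a)" for v
  have e: "e v \<in> dom A \<and> e' v \<in> g (e v)" for v
    unfolding e_def by (rule someI_ex) (use g e' in \<open>auto simp: surj_hypermorphism_def\<close>)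
  then have "sat A e \<phi>" using \<open>models A \<phi>\<close> unfolding models_def by blast
  with g e show "sat B e' \<phi>" by (blast intro: sat_surj_hypermorphism)
qed

lemma pH_equiv_if_surj_hypermorphisms:
  assumes "surj_hypermorphism g A B" and "surj_hypermorphism h B A"
  shows "pH_equiv Sig ar A B"
  using assms models_surj_hypermorphism unfolding pH_equiv_def by blast

definition some_loop :: pH where
  "some_loop = Ex 0 (Atom 0 [0, 0])"

definition all_loops :: pH where
  "all_loops = All 0 (Atom 0 [0, 0])"

lemma pH_sentence_loops:
  assumes "0 \<in> Sig" and "ar 0 = 2"
  shows "pH_sentence Sig ar some_loop" and "pH_sentence Sig ar all_loops"
  using assms by (auto simp: pH_sentence_def some_loop_def all_loops_def)

lemma models_some_loop:
  "dom C \<noteq> {} \<Longrightarrow> models C some_loop \<longleftrightarrow> (\<exists>c\<in>dom C. [c, c] \<in> rel C 0)"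
  unfolding models_def some_loop_def by auto

lemma models_all_loops:
  "dom C \<noteq> {} \<Longrightarrow> models C all_loops \<longleftrightarrow> (\<forall>c\<in>dom C. [c, c] \<in> rel C 0)"
  unfolding models_def all_loops_def by auto

definition loop_edge :: "nat struc" where
  "loop_edge = \<lparr>dom = {0, 1, 2}, rel = (\<lambda>R. if R = 0 then {[0, 0], [0, 1]} else {})\<rparr>"

definition loop_isolated :: "nat struc" where
  "loop_isolated = \<lparr>dom = {0, 1}, rel = (\<lambda>R. if R = 0 then {[0, 0]} else {})\<rparr>"

abbreviation (input) Sig\<^sub>2 :: "nat set" where "Sig\<^sub>2 \<equiv> {0}"
abbreviation (input) ar\<^sub>2 :: "nat \<Rightarrow> nat" where "ar\<^sub>2 \<equiv> \<lambda>_. 2"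

lemma list_all2_Cons_Cons_Nil:
  "list_all2 P [a, b] t \<longleftrightarrow> (\<exists>x y. t = [x, y] \<and> P a x \<and> P b y)"
  by (cases t rule: remdups_adj.cases) auto

lemma pH_equiv_loop_edge_loop_isolated:
  "pH_equiv Sig ar loop_edge loop_isolated"
proof (rule pH_equiv_if_surj_hypermorphisms)
  show "surj_hypermorphism (\<lambda>a. if a = 2 then {1} else {0}) loop_edge loop_isolated"
    by (auto simp: surj_hypermorphism_def loop_edge_def loop_isolated_def
        list_all2_Cons_Cons_Nil split: if_splits)
  show "surj_hypermorphism (\<lambda>a. if a = 1 then {1, 2} else {0}) loop_isolated loop_edge"
    by (auto simp: surj_hypermorphism_def loop_edge_def loop_isolated_def
        list_all2_Cons_Cons_Nil split: if_splits)
qed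

lemma is_struc_loop_edge: "is_struc Sig\<^sub>2 ar\<^sub>2 loop_edge"
  by (auto simp: is_struc_def loop_edge_def)

lemma substruc_loop_isolated_loop_edge: "substruc Sig\<^sub>2 ar\<^sub>2 loop_isolated loop_edge"
  using is_struc_loop_edge
  by (auto simp: substruc_def is_struc_def loop_edge_def loop_isolated_def)

lemma not_induced_substruc_loop_isolated_loop_edge:
  "\<not> induced_substruc Sig\<^sub>2 ar\<^sub>2 loop_isolated loop_edge"
proof
  assume "induced_substruc Sig\<^sub>2 ar\<^sub>2 loop_isolated loop_edge"
  then have "rel loop_isolated 0 = {t \<in> rel loop_edge 0. set t \<subseteq> dom loop_isolated}"
    unfolding induced_substruc_def by blast
  moreover have "[0, 1] \<in> {t \<in> rel loop_edge 0. set t \<subseteq> dom loop_isolated}"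
    by (simp add: loop_edge_def loop_isolated_def)
  ultimately have "[0, 1] \<in> rel loop_isolated 0" by blast
  then show False by (simp add: loop_isolated_def)
qed

lemma pH_equiv_substruc_loop_isolated_eq:
  fixes C :: "nat struc"
  assumes sub: "substruc Sig\<^sub>2 ar\<^sub>2 C loop_isolated"
    and equiv: "pH_equiv Sig\<^sub>2 ar\<^sub>2 loop_edge C"
  shows "C = loop_isolated"
proof -
  have C: "is_struc Sig\<^sub>2 ar\<^sub>2 C" and dom_C: "dom C \<subseteq> {0, 1}" and rel_C: "rel C 0 \<subseteq> {[0, 0]}"
    using sub by (auto simp: substruc_def loop_isolated_def)
  then have ne: "dom C \<noteq> {}" and rel_other: "\<And>R. R \<noteq> 0 \<Longrightarrow> rel C R = {}"
    by (auto simp: is_struc_def)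
  have "models C some_loop"
    using equiv pH_sentence_loops(1)[of Sig\<^sub>2 ar\<^sub>2]
    by (auto simp: pH_equiv_def models_some_loop loop_edge_def)
  then obtain c where "c \<in> dom C" "[c, c] \<in> rel C 0"
    using models_some_loop[OF ne] by blast
  with rel_C have rel0: "rel C 0 = {[0, 0]}" and "0 \<in> dom C" by auto
  have "\<not> models C all_loops"
    using equiv pH_sentence_loops(2)[of Sig\<^sub>2 ar\<^sub>2]
    by (auto simp: pH_equiv_def models_all_loops loop_edge_def)
  then obtain d where "d \<in> dom C" "[d, d] \<notin> rel C 0"
    using models_all_loops[OF ne] by blast
  with dom_C rel0 \<open>0 \<in> dom C\<close> have "dom C = {0, 1}" by auto
  moreover have "rel C = rel loop_isolated"
    using rel0 rel_other by (auto simp: loop_isolated_def fun_eq_iff)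
  ultimately show ?thesis by (simp add: struc.equality loop_isolated_def)
qed

lemma Q_core_loop_isolated_loop_edge: "Q_core Sig\<^sub>2 ar\<^sub>2 loop_isolated loop_edge"
  using substruc_loop_isolated_loop_edge pH_equiv_loop_edge_loop_isolated
    pH_equiv_substruc_loop_isolated_eq
  unfolding Q_core_def by blast

theorem mainTheorem17:
  shows "\<exists>(Sig :: nat set) (ar :: nat \<Rightarrow> nat) (A :: nat struc) B.
           finite Sig \<and> is_struc Sig ar A \<and> finite (dom A) \<and> card (dom A) = 3 \<and>
           Q_core Sig ar B A \<and> \<not> induced_substruc Sig ar B A"
proof (intro exI conjI)
  show "finite Sig\<^sub>2" by simp
  show "is_struc Sig\<^sub>2 ar\<^sub>2 loop_edge" by (rule is_struc_loop_edge)
  show "finite (dom loop_edge)" and "card (dom loop_edge) = 3"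
    by (simp_all add: loop_edge_def)
  show "Q_core Sig\<^sub>2 ar\<^sub>2 loop_isolated loop_edge" by (rule Q_core_loop_isolated_loop_edge)
  show "\<not> induced_substruc Sig\<^sub>2 ar\<^sub>2 loop_isolated loop_edge"
    by (rule not_induced_substruc_loop_isolated_loop_edge)
qed

end
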